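(* Let $R$ be a blind bisimulation on the nodes of a $\lambda$-graph $G$. Let $n,m$ be nodes with $n\,R\,m$ and $\tau$ a trace such that the path $n\xrightarrow{\tau}$ crosses an abstraction node $l$ and the path $m\xrightarrow{\tau}$ crosses an abstraction node $l'$. Then $l\,R\,l'$ holds if and only if $\mathrm{idx}(l,n\xrightarrow{\tau})=\mathrm{idx}(l',m\xrightarrow{\tau})$.
   Context: A pre-$\lambda$-graph is a directed graph whose nodes are of four kinds: an application node $@(n_1,n_2)$ has exactly two children, its left child $n_1$ and its right child $n_2$; an abstraction node $\lambda(n)$ has exactly one child, its body $n$; a free variable node has no children and carries an atom $\mathrm{id}(n)$ from a fixed set of atoms, distinct free variable nodes carrying distinct atoms; a bound variable node $\mathrm{var}(l)$ has exactly one outgoing binding edge, to an abstraction node $l$ (its binder). Letters $l,l'$ denote abstraction nodes. A trace is a finite sequence of directions from $\{\swarrow,\downarrow,\searrow\}$; $\epsilon$ is the empty trace and $d\cdot\tau$ is the trace $\tau$ extended by one final step $d$. Paths $n\xrightarrow{\tau}m$ are defined inductively: $n\xrightarrow{\epsilon}n$; if $n\xrightarrow{\tau}\lambda(m)$ then $n\xrightarrow{\downarrow\cdot\tau}m$; if $n\xrightarrow{\tau}@(m_1,m_2)$ then $n\xrightarrow{\swarrow\cdot\tau}m_1$ and $n\xrightarrow{\searrow\cdot\tau}m_2$ (binding edges are never followed). We write $n\xrightarrow{\tau}$ if $n\xrightarrow{\tau}m$ for some $m$. The path $n\xrightarrow{\tau}$ crosses a node $m$ if either $n\xrightarrow{\tau}m$,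 or $\tau=d\cdot\tau'$ and $n\xrightarrow{\tau'}$ crosses $m$. A root is a node $r$ such that the only path ending in $r$ has the empty trace. A node $m$ dominates $n$ if every path from a root to $n$ crosses $m$. A $\lambda$-graph is a pre-$\lambda$-graph that has finitely many nodes, is acyclic ($n\xrightarrow{\tau}n$ holds only for $\tau=\epsilon$), and is dominated (every bound variable node $\mathrm{var}(l)$ is dominated by its binder $l$). Two nodes are homogeneous if both are application nodes, or both abstraction nodes, or both free variable nodes, or both bound variable nodes; a binary relation $R$ on nodes is homogeneous if it only relates homogeneous nodes. Rules: $(\swarrow)$: $@(n_1,n_2)\,R\,@(m_1,m_2)$ implies $n_1\,R\,m_1$; $(\searrow)$: $@(n_1,n_2)\,R\,@(m_1,m_2)$ implies $n_2\,R\,m_2$; $(\downarrow)$: $\lambda(n)\,R\,\lambda(m)$ implies $n\,R\,m$. $R$ is propagated if closed under $(\swarrow),(\downarrow),(\searrow)$. A blind bisimulation is a homogeneous propagated relation. For a path $n\xrightarrow{\tau}$ crossing an abstraction node $l$, the index $\mathrm{idx}(l,n\xrightarrow{\tau})$ is defined by induction on the crossing: it is $0$ if $n\xrightarrow{\tau}l$; for $n\xrightarrow{d\cdot\tau}l'$ with $l'$ an abstraction node different from $l$ it is $\mathrm{idx}(l,n\xrightarrow{\tau})+1$; for $n\xrightarrow{d\cdot\tau}m$ with $m$ not an abstraction node it is $\mathrm{idx}(l,n\xrightarrow{\tau})$. *)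

theory Defs
  imports Main
begin

text \<open>Node kinds: a node is labelled by its kind; children / binder are nodes of type 'n,
  free variables carry atoms of type 'a.\<close>
datatype ('n, 'a) kind = App 'n 'n | Abs 'n | FVar 'a | BVar 'n

datatype dir = SW | Down | SE

text \<open>A trace is a list of directions; the extension d\<cdot>\<tau> of \<tau> by a final step d is d # \<tau>.\<close>
type_synonym trace = "dir list"

text \<open>A pre-lambda-graph: node set N and labelling lab (only meaningful on N).\<close>
definition pre_lambda_graph :: "'n set \<Rightarrow> ('n \<Rightarrow> ('n, 'a) kind) \<Rightarrow> bool" where
  "pre_lambda_graph N lab \<longleftrightarrow>
     (\<forall>v\<in>N. \<forall>n1 n2. lab v = App n1 n2 \<longrightarrow> n1 \<in> N \<and> n2 \<in> N) \<and>
     (\<forall>v\<in>N. \<forall>b. lab v = Abs b \<longrightarrow> b \<in> N) \<and>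
     (\<forall>v\<in>N. \<forall>l. lab v = BVar l \<longrightarrow> l \<in> N \<and> (\<exists>b. lab l = Abs b)) \<and>
     (\<forall>v\<in>N. \<forall>w\<in>N. \<forall>x. lab v = FVar x \<and> lab w = FVar x \<longrightarrow> v = w)"

inductive path :: "'n set \<Rightarrow> ('n \<Rightarrow> ('n, 'a) kind) \<Rightarrow> 'n \<Rightarrow> trace \<Rightarrow> 'n \<Rightarrow> bool"
  for N lab where
  path_eps: "n \<in> N \<Longrightarrow> path N lab n [] n"
| path_down: "path N lab n \<tau> m \<Longrightarrow> lab m = Abs m' \<Longrightarrow> path N lab n (Down # \<tau>) m'"
| path_sw: "path N lab n \<tau> m \<Longrightarrow> lab m = App m1 m2 \<Longrightarrow> path N lab n (SW # \<tau>) m1"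
| path_se: "path N lab n \<tau> m \<Longrightarrow> lab m = App m1 m2 \<Longrightarrow> path N lab n (SE # \<tau>) m2"

definition has_path :: "'n set \<Rightarrow> ('n \<Rightarrow> ('n, 'a) kind) \<Rightarrow> 'n \<Rightarrow> trace \<Rightarrow> bool" where
  "has_path N lab n \<tau> \<longleftrightarrow> (\<exists>m. path N lab n \<tau> m)"

fun crosses_aux :: "'n set \<Rightarrow> ('n \<Rightarrow> ('n, 'a) kind) \<Rightarrow> 'n \<Rightarrow> trace \<Rightarrow> 'n \<Rightarrow> bool" where
  "crosses_aux N lab n [] m \<longleftrightarrow> path N lab n [] m"
| "crosses_aux N lab n (d # \<tau>) m \<longleftrightarrow> path N lab n (d # \<tau>) m \<or> crosses_aux N lab n \<tau> m"

definition crosses :: "'n set \<Rightarrow> ('n \<Rightarrow> ('n, 'a) kind) \<Rightarrow> 'n \<Rightarrow> trace \<Rightarrow> 'n \<Rightarrow> bool" where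
  "crosses N lab n \<tau> m \<longleftrightarrow> has_path N lab n \<tau> \<and> crosses_aux N lab n \<tau> m"

definition is_abs :: "('n \<Rightarrow> ('n, 'a) kind) \<Rightarrow> 'n \<Rightarrow> bool" where
  "is_abs lab v \<longleftrightarrow> (\<exists>b. lab v = Abs b)"

definition is_root :: "'n set \<Rightarrow> ('n \<Rightarrow> ('n, 'a) kind) \<Rightarrow> 'n \<Rightarrow> bool" where
  "is_root N lab r \<longleftrightarrow> r \<in> N \<and> (\<forall>n \<tau>. path N lab n \<tau> r \<longrightarrow> \<tau> = [])"

definition dominates :: "'n set \<Rightarrow> ('n \<Rightarrow> ('n, 'a) kind) \<Rightarrow> 'n \<Rightarrow> 'n \<Rightarrow> bool" where
  "dominates N lab m n \<longleftrightarrow> (\<forall>r \<tau>. is_root N lab r \<and> path N lab r \<tau> n \<longrightarrow> crosses N lab r \<tau> m)"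

definition lambda_graph :: "'n set \<Rightarrow> ('n \<Rightarrow> ('n, 'a) kind) \<Rightarrow> bool" where
  "lambda_graph N lab \<longleftrightarrow> pre_lambda_graph N lab \<and> finite N \<and>
     (\<forall>n \<tau>. path N lab n \<tau> n \<longrightarrow> \<tau> = []) \<and>
     (\<forall>v\<in>N. \<forall>l. lab v = BVar l \<longrightarrow> dominates N lab l v)"

fun same_kind :: "('n, 'a) kind \<Rightarrow> ('n, 'a) kind \<Rightarrow> bool" where
  "same_kind (App _ _) (App _ _) = True"
| "same_kind (Abs _) (Abs _) = True"
| "same_kind (FVar _) (FVar _) = True"
| "same_kind (BVar _) (BVar _) = True"
| "same_kind _ _ = False"

definition homogeneous :: "('n \<Rightarrow> ('n, 'a) kind) \<Rightarrow> ('n \<times> 'n) set \<Rightarrow> bool" where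
  "homogeneous lab R \<longleftrightarrow> (\<forall>(n, m)\<in>R. same_kind (lab n) (lab m))"

definition propagated :: "('n \<Rightarrow> ('n, 'a) kind) \<Rightarrow> ('n \<times> 'n) set \<Rightarrow> bool" where
  "propagated lab R \<longleftrightarrow>
     (\<forall>n m n1 n2 m1 m2. (n, m) \<in> R \<and> lab n = App n1 n2 \<and> lab m = App m1 m2 \<longrightarrow>
        (n1, m1) \<in> R \<and> (n2, m2) \<in> R) \<and>
     (\<forall>n m b c. (n, m) \<in> R \<and> lab n = Abs b \<and> lab m = Abs c \<longrightarrow> (b, c) \<in> R)"

definition blind_bisim :: "'n set \<Rightarrow> ('n \<Rightarrow> ('n, 'a) kind) \<Rightarrow> ('n \<times> 'n) set \<Rightarrow> bool" where
  "blind_bisim N lab R \<longleftrightarrow> R \<subseteq> N \<times> N \<and> homogeneous lab R \<and> propagated lab R"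

fun idx :: "'n set \<Rightarrow> ('n \<Rightarrow> ('n, 'a) kind) \<Rightarrow> 'n \<Rightarrow> 'n \<Rightarrow> trace \<Rightarrow> nat" where
  "idx N lab l n [] = 0"
| "idx N lab l n (d # \<tau>) =
     (if path N lab n (d # \<tau>) l then 0
      else idx N lab l n \<tau> + (if \<exists>l'. path N lab n (d # \<tau>) l' \<and> is_abs lab l' then 1 else 0))"

end

theory Submission
  imports Defs
begin

text \<open>
Both paths follow the same trace, so a blind bisimulation relates their endpoints step by step,
and related nodes admit exactly the same traces. Inducting on the trace, the indices can only
disagree when one of the two abstractions is the current endpoint while the other was crossed
strictly earlier. Such a pair is never related: in a finite acyclic graph the length of the
longest path leaving a node strictly decreases along paths, yet it is the same for related nodes.
\<close>

fun child_along :: "dir \<Rightarrow> ('n, 'a) kind \<Rightarrow> 'n \<Rightarrow> bool" where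
  "child_along Down (Abs b) w \<longleftrightarrow> w = b"
| "child_along SW (App n1 n2) w \<longleftrightarrow> w = n1"
| "child_along SE (App n1 n2) w \<longleftrightarrow> w = n2"
| "child_along _ _ _ \<longleftrightarrow> False"

lemma child_along_unique: "child_along d k w \<Longrightarrow> child_along d k w' \<Longrightarrow> w = w'"
  by (cases d; cases k) auto

lemma child_along_in:
  assumes "pre_lambda_graph N lab" "e \<in> N" "child_along d (lab e) w"
  shows "w \<in> N"
proof (cases "lab e")
  case (App n1 n2)
  then have "n1 \<in> N" "n2 \<in> N" using assms(1,2) unfolding pre_lambda_graph_def by blast+
  with App assms(3) show ?thesis by (cases d) auto
next
  case (Abs b)
  then have "b \<in> N" using assms(1,2) unfolding pre_lambda_graph_def by blast
  with Abs assms(3) show ?thesis by (cases d) auto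
qed (use assms(3) in \<open>cases d; auto\<close>)+

lemma same_kind_child_along:
  "same_kind k k' \<Longrightarrow> (\<exists>x. child_along d k x) \<longleftrightarrow> (\<exists>y. child_along d k' y)"
  by (cases d; cases k; cases k'; simp)

lemma path_Nil_iff: "path N lab u [] w \<longleftrightarrow> u \<in> N \<and> w = u"
  by (auto elim: path.cases intro: path_eps)

lemma path_Cons_iff:
  "path N lab u (d # \<tau>) w \<longleftrightarrow> (\<exists>e. path N lab u \<tau> e \<and> child_along d (lab e) w)"
proof
  assume "path N lab u (d # \<tau>) w"
  then show "\<exists>e. path N lab u \<tau> e \<and> child_along d (lab e) w"
    by (cases rule: path.cases) auto
next
  assume "\<exists>e. path N lab u \<tau> e \<and> child_along d (lab e) w"
  then obtain e where "path N lab u \<tau> e" "child_along d (lab e) w" by blast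
  then show "path N lab u (d # \<tau>) w"
    by (cases d; cases "lab e") (auto intro: path.intros)
qed

lemma path_unique: "path N lab u \<tau> w \<Longrightarrow> path N lab u \<tau> w' \<Longrightarrow> w = w'"
  by (induction \<tau> arbitrary: w w') (auto simp: path_Nil_iff path_Cons_iff dest: child_along_unique)

lemma path_end_in: "pre_lambda_graph N lab \<Longrightarrow> path N lab u \<tau> w \<Longrightarrow> w \<in> N"
  by (induction \<tau> arbitrary: w) (auto simp: path_Nil_iff path_Cons_iff intro: child_along_in)

text \<open>A trace lists its steps last-first, so \<open>\<rho> @ \<sigma>\<close> walks \<open>\<sigma>\<close> and then \<open>\<rho>\<close>.\<close>
lemma path_append_iff:
  assumes "pre_lambda_graph N lab"
  shows "path N lab u (\<rho> @ \<sigma>) w \<longleftrightarrow> (\<exists>e. path N lab u \<sigma> e \<and> path N lab e \<rho> w)"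
  using path_end_in[OF assms] by (induction \<rho> arbitrary: w) (auto simp: path_Nil_iff path_Cons_iff)

lemma has_path_Cons_iff:
  "has_path N lab u (d # \<tau>) \<longleftrightarrow> (\<exists>e. path N lab u \<tau> e \<and> (\<exists>w. child_along d (lab e) w))"
  by (auto simp: has_path_def path_Cons_iff)

definition descendants :: "'n set \<Rightarrow> ('n \<Rightarrow> ('n, 'a) kind) \<Rightarrow> 'n \<Rightarrow> 'n set" where
  "descendants N lab u = {w. \<exists>\<sigma>. path N lab u \<sigma> w}"

lemma descendants_subset: "pre_lambda_graph N lab \<Longrightarrow> descendants N lab u \<subseteq> N"
  by (auto simp: descendants_def intro: path_end_in)

lemma descendants_psubset:
  assumes pl: "pre_lambda_graph N lab" and acyclic: "\<And>v \<tau>. path N lab v \<tau> v \<Longrightarrow> \<tau> = []"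
    and step: "path N lab u [d] u1"
  shows "descendants N lab u1 \<subset> descendants N lab u"
proof -
  have "path N lab u1 \<rho> x \<Longrightarrow> path N lab u (\<rho> @ [d]) x" for \<rho> x
    using step path_append_iff[OF pl] by blast
  then have "descendants N lab u1 \<subseteq> descendants N lab u" and "u \<notin> descendants N lab u1"
    by (auto simp: descendants_def dest: acyclic)
  moreover have "u \<in> descendants N lab u"
    using step by (auto simp: descendants_def path_Cons_iff path_Nil_iff intro: path_eps)
  ultimately show ?thesis by blast
qed

lemma path_length_less_card:
  assumes pl: "pre_lambda_graph N lab" and fin: "finite N"
    and acyclic: "\<And>v \<tau>. path N lab v \<tau> v \<Longrightarrow> \<tau> = []"
  shows "path N lab u \<sigma> w \<Longrightarrow> length \<sigma> < card (descendants N lab u)"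
proof (induction \<sigma> arbitrary: u rule: rev_induct)
  case Nil
  then have "path N lab u [] u" by (simp add: path_Nil_iff)
  then have "u \<in> descendants N lab u" by (auto simp: descendants_def)
  moreover have "finite (descendants N lab u)"
    using descendants_subset[OF pl] fin by (rule finite_subset)
  ultimately show ?case by (auto simp: card_gt_0_iff)
next
  case (snoc d \<sigma>)
  then obtain u1 where step: "path N lab u [d] u1" and "path N lab u1 \<sigma> w"
    using path_append_iff[OF pl] by blast
  from this(2) have "length \<sigma> < card (descendants N lab u1)" by (rule snoc.IH)
  moreover have "card (descendants N lab u1) < card (descendants N lab u)"
    using descendants_psubset[OF pl acyclic step] descendants_subset[OF pl] fin
    by (meson finite_subset psubset_card_mono)
  ultimately show ?case by simp
qed

definition traces :: "'n set \<Rightarrow> ('n \<Rightarrow> ('n, 'a) kind) \<Rightarrow> 'n \<Rightarrow> trace set" where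
  "traces N lab u = {\<sigma>. has_path N lab u \<sigma>}"

definition height :: "'n set \<Rightarrow> ('n \<Rightarrow> ('n, 'a) kind) \<Rightarrow> 'n \<Rightarrow> nat" where
  "height N lab u = Max (length ` traces N lab u)"

lemma finite_trace_lengths:
  assumes "lambda_graph N lab"
  shows "finite (length ` traces N lab u)"
proof (rule finite_subset)
  have pl: "pre_lambda_graph N lab" and fin: "finite N"
    and acyclic: "\<And>v \<tau>. path N lab v \<tau> v \<Longrightarrow> \<tau> = []"
    using assms by (auto simp: lambda_graph_def)
  have "card (descendants N lab u) \<le> card N"
    using descendants_subset[OF pl] fin by (rule card_mono[rotated])
  then show "length ` traces N lab u \<subseteq> {..<card N}"
    using path_length_less_card[OF pl fin acyclic] by (fastforce simp: traces_def has_path_def)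
qed simp

lemma height_less:
  assumes lg: "lambda_graph N lab" and p: "path N lab w \<sigma> e" and "\<sigma> \<noteq> []"
  shows "height N lab e < height N lab w"
proof -
  have pl: "pre_lambda_graph N lab" using lg by (simp add: lambda_graph_def)
  have "[] \<in> traces N lab e"
    using path_end_in[OF pl p] by (auto simp: traces_def has_path_def path_Nil_iff)
  then have "height N lab e \<in> length ` traces N lab e"
    unfolding height_def using finite_trace_lengths[OF lg] by (intro Max_in) auto
  then obtain \<rho> x where \<rho>: "length \<rho> = height N lab e" and "path N lab e \<rho> x"
    by (auto simp: traces_def has_path_def)
  with p have "path N lab w (\<rho> @ \<sigma>) x" by (auto simp: path_append_iff[OF pl])
  then have "\<rho> @ \<sigma> \<in> traces N lab w" by (auto simp: traces_def has_path_def)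
  then have "length (\<rho> @ \<sigma>) \<le> height N lab w"
    unfolding height_def using finite_trace_lengths[OF lg] by (intro Max_ge) (auto simp del: length_append)
  then have "height N lab e + length \<sigma> \<le> height N lab w" using \<rho> by simp
  moreover have "length \<sigma> > 0" using \<open>\<sigma> \<noteq> []\<close> by simp
  ultimately show ?thesis by linarith
qed

lemma blind_bisim_same_kind:
  "blind_bisim N lab R \<Longrightarrow> (u, v) \<in> R \<Longrightarrow> same_kind (lab u) (lab v)"
  by (auto simp: blind_bisim_def homogeneous_def)

lemma blind_bisim_child_along:
  assumes "blind_bisim N lab R" "(e, f) \<in> R" "child_along d (lab e) x" "child_along d (lab f) y"
  shows "(x, y) \<in> R"
proof -
  have "\<And>n1 n2 m1 m2. lab e = App n1 n2 \<Longrightarrow> lab f = App m1 m2 \<Longrightarrow> (n1, m1) \<in> R \<and> (n2, m2) \<in> R"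
    and "\<And>b c. lab e = Abs b \<Longrightarrow> lab f = Abs c \<Longrightarrow> (b, c) \<in> R"
    using assms(1,2) unfolding blind_bisim_def propagated_def by blast+
  with assms(3,4) show ?thesis by (cases d; cases "lab e"; cases "lab f") auto
qed

lemma same_kind_commute: "same_kind k k' \<longleftrightarrow> same_kind k' k"
  by (cases k; cases k') simp_all

lemma blind_bisim_converse:
  assumes "blind_bisim N lab R"
  shows "blind_bisim N lab (R\<inverse>)"
proof -
  have "R\<inverse> \<subseteq> N \<times> N" using assms by (auto simp: blind_bisim_def)
  moreover have "homogeneous lab (R\<inverse>)"
    using assms by (auto simp: blind_bisim_def homogeneous_def same_kind_commute)
  moreover have "propagated lab (R\<inverse>)"
    using assms unfolding blind_bisim_def propagated_def by blast
  ultimately show ?thesis by (simp add: blind_bisim_def)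
qed

lemma blind_bisim_path_related:
  assumes "blind_bisim N lab R" "(u, v) \<in> R"
  shows "path N lab u \<sigma> x \<Longrightarrow> path N lab v \<sigma> y \<Longrightarrow> (x, y) \<in> R"
proof (induction \<sigma> arbitrary: x y)
  case Nil
  with assms(2) show ?case by (simp add: path_Nil_iff)
next
  case (Cons d \<sigma>)
  then obtain e f where "path N lab u \<sigma> e" "child_along d (lab e) x"
    and "path N lab v \<sigma> f" "child_along d (lab f) y"
    by (auto simp: path_Cons_iff)
  with Cons.IH show ?case using blind_bisim_child_along[OF assms(1)] by blast
qed

lemma blind_bisim_traces_eq:
  assumes bb: "blind_bisim N lab R" and uv: "(u, v) \<in> R"
  shows "traces N lab u = traces N lab v"
proof -
  have "has_path N lab u \<sigma> \<longleftrightarrow> has_path N lab v \<sigma>" for \<sigma>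
  proof (induction \<sigma>)
    case Nil
    from bb uv have "u \<in> N" "v \<in> N" by (auto simp: blind_bisim_def)
    then show ?case by (simp add: has_path_def path_Nil_iff)
  next
    case (Cons d \<sigma>)
    show ?case
    proof (cases "has_path N lab u \<sigma>")
      case True
      with Cons.IH obtain e f where e: "path N lab u \<sigma> e" and f: "path N lab v \<sigma> f"
        by (auto simp: has_path_def)
      then have "same_kind (lab e) (lab f)"
        using blind_bisim_same_kind[OF bb] blind_bisim_path_related[OF bb uv] by blast
      moreover have "has_path N lab u (d # \<sigma>) \<longleftrightarrow> (\<exists>x. child_along d (lab e) x)"
        using e by (auto simp: has_path_Cons_iff dest: path_unique[OF e])
      moreover have "has_path N lab v (d # \<sigma>) \<longleftrightarrow> (\<exists>y. child_along d (lab f) y)"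
        using f by (auto simp: has_path_Cons_iff dest: path_unique[OF f])
      ultimately show ?thesis by (simp add: same_kind_child_along)
    next
      case False
      with Cons.IH show ?thesis by (auto simp: has_path_def path_Cons_iff)
    qed
  qed
  then show ?thesis by (simp add: traces_def)
qed

lemma same_kind_is_abs: "same_kind (lab u) (lab v) \<Longrightarrow> is_abs lab u \<longleftrightarrow> is_abs lab v"
  by (cases "lab u"; cases "lab v") (simp_all add: is_abs_def)

lemma crosses_aux_imp_prefix_path:
  "crosses_aux N lab u \<tau> w \<Longrightarrow> \<exists>\<sigma> \<rho>. \<tau> = \<sigma> @ \<rho> \<and> path N lab u \<rho> w"
proof (induction \<tau>)
  case Nil
  then show ?case by simp
next
  case (Cons d \<tau>)
  show ?case
  proof (cases "path N lab u (d # \<tau>) w")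
    case True
    then show ?thesis by (metis append_Nil)
  next
    case False
    with Cons obtain \<sigma> \<rho> where "\<tau> = \<sigma> @ \<rho>" "path N lab u \<rho> w" by auto
    then show ?thesis by (metis append_Cons)
  qed
qed

lemma crossed_reaches_end:
  assumes pl: "pre_lambda_graph N lab"
    and "crosses_aux N lab u \<tau> w" and e: "path N lab u (d # \<tau>) e"
  shows "\<exists>\<sigma>. \<sigma> \<noteq> [] \<and> path N lab w \<sigma> e"
proof -
  obtain \<sigma> \<rho> where \<tau>: "\<tau> = \<sigma> @ \<rho>" and w: "path N lab u \<rho> w"
    using crosses_aux_imp_prefix_path[OF assms(2)] by blast
  from e obtain w' where "path N lab u \<rho> w'" and w': "path N lab w' (d # \<sigma>) e"
    unfolding \<tau> using path_append_iff[OF pl, of u "d # \<sigma>"] by auto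
  with path_unique[OF w] have "path N lab w (d # \<sigma>) e" by simp
  then show ?thesis by blast
qed

lemma crossed_not_related_to_end:
  assumes lg: "lambda_graph N lab" and bb: "blind_bisim N lab R" and xy: "(x, y) \<in> R"
    and "crosses N lab u \<tau> w" and y: "path N lab u (d # \<tau>) y"
  shows "(x, w) \<notin> R"
proof
  assume "(x, w) \<in> R"
  have "pre_lambda_graph N lab" "crosses_aux N lab u \<tau> w"
    using assms(1,4) by (simp_all add: lambda_graph_def crosses_def)
  then obtain \<sigma> where "\<sigma> \<noteq> []" "path N lab w \<sigma> y"
    using crossed_reaches_end[OF _ _ y] by blast
  then have "height N lab y < height N lab w" by (rule height_less[OF lg, rotated])
  moreover have "traces N lab x = traces N lab y" "traces N lab x = traces N lab w"
    using blind_bisim_traces_eq[OF bb] xy \<open>(x, w) \<in> R\<close> by blast+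
  then have "height N lab x = height N lab y" "height N lab x = height N lab w"
    by (simp_all add: height_def)
  ultimately show False by simp
qed

lemma crosses_Cons_not_end:
  assumes "crosses N lab u (d # \<tau>) w" and e: "path N lab u (d # \<tau>) e" and "w \<noteq> e"
  shows "crosses N lab u \<tau> w"
proof -
  have "\<not> path N lab u (d # \<tau>) w" using path_unique[OF e] \<open>w \<noteq> e\<close> by blast
  with assms(1) have "crosses_aux N lab u \<tau> w" by (simp add: crosses_def)
  moreover have "has_path N lab u \<tau>" using e by (auto simp: has_path_def path_Cons_iff)
  ultimately show ?thesis by (simp add: crosses_def)
qed

lemma idx_Cons:
  assumes "path N lab u (d # \<tau>) e"
  shows "idx N lab l u (d # \<tau>) =
    (if l = e then 0 else idx N lab l u \<tau> + (if is_abs lab e then 1 else 0))"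
proof -
  have "path N lab u (d # \<tau>) l \<longleftrightarrow> l = e"
    using assms path_unique[OF assms] by blast
  moreover have "(\<exists>l'. path N lab u (d # \<tau>) l' \<and> is_abs lab l') \<longleftrightarrow> is_abs lab e"
    using assms path_unique[OF assms] by blast
  ultimately show ?thesis by (simp only: idx.simps)
qed

lemma end_vs_crossed:
  assumes lg: "lambda_graph N lab" and bb: "blind_bisim N lab R" and R: "(en, em) \<in> R"
    and en: "path N lab n (d # \<tau>) en" and em: "path N lab m (d # \<tau>) em"
    and "crosses N lab m (d # \<tau>) l'" and "l' \<noteq> em" and "is_abs lab en"
  shows "(en, l') \<notin> R \<and> idx N lab en n (d # \<tau>) \<noteq> idx N lab l' m (d # \<tau>)"
proof
  have "crosses N lab m \<tau> l'" using assms(6) em assms(7) by (rule crosses_Cons_not_end)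
  then show "(en, l') \<notin> R" by (rule crossed_not_related_to_end[OF lg bb R _ em])
  have "is_abs lab em"
    using same_kind_is_abs[OF blind_bisim_same_kind[OF bb R]] \<open>is_abs lab en\<close> by simp
  then show "idx N lab en n (d # \<tau>) \<noteq> idx N lab l' m (d # \<tau>)"
    using \<open>l' \<noteq> em\<close> by (simp add: idx_Cons[OF en] idx_Cons[OF em] del: idx.simps)
qed

theorem mainTheorem18:
  fixes N :: "'n set" and lab :: "'n \<Rightarrow> ('n, 'a) kind" and R :: "('n \<times> 'n) set"
  assumes "lambda_graph N lab"
    and "blind_bisim N lab R"
    and "(n, m) \<in> R"
    and "crosses N lab n \<tau> l" and "is_abs lab l"
    and "crosses N lab m \<tau> l'" and "is_abs lab l'"
  shows "(l, l') \<in> R \<longleftrightarrow> idx N lab l n \<tau> = idx N lab l' m \<tau>"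
  using assms(4-7)
proof (induction \<tau> arbitrary: l l')
  case Nil
  with assms(3) show ?case by (simp add: crosses_def path_Nil_iff)
next
  case (Cons d \<tau>)
  obtain en em where en: "path N lab n (d # \<tau>) en" and em: "path N lab m (d # \<tau>) em"
    using Cons.prems(1,3) by (auto simp: crosses_def has_path_def)
  have R: "(en, em) \<in> R" by (rule blind_bisim_path_related[OF assms(2,3) en em])
  have abs: "is_abs lab en \<longleftrightarrow> is_abs lab em"
    by (rule same_kind_is_abs[OF blind_bisim_same_kind[OF assms(2) R]])
  note idx_step = idx_Cons[OF en, of l] idx_Cons[OF em, of l']
  consider "l = en" "l' = em" | "l = en" "l' \<noteq> em" | "l \<noteq> en" "l' = em" | "l \<noteq> en" "l' \<noteq> em"
    by blast
  then show ?case
  proof cases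
    case 1
    with R show ?thesis using idx_step by (simp del: idx.simps)
  next
    case 2
    with end_vs_crossed[OF assms(1,2) R en em Cons.prems(3)] Cons.prems(2) show ?thesis by auto
  next
    case 3
    with end_vs_crossed[OF assms(1) blind_bisim_converse[OF assms(2)] _ em en Cons.prems(1)]
      R Cons.prems(4) show ?thesis by auto
  next
    case 4
    have "crosses N lab n \<tau> l" using Cons.prems(1) en 4(1) by (rule crosses_Cons_not_end)
    moreover have "crosses N lab m \<tau> l'" using Cons.prems(3) em 4(2) by (rule crosses_Cons_not_end)
    ultimately have "(l, l') \<in> R \<longleftrightarrow> idx N lab l n \<tau> = idx N lab l' m \<tau>"
      using Cons.IH Cons.prems(2,4) by blast
    with 4 abs show ?thesis using idx_step by (simp del: idx.simps)
  qed
qed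

end
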